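(* In the setting described in the context, define $\varphi$ on metrics $d\in\mathcal{B}_2$ on $A$ by $\varphi(d)(x,y)=d(x,\cdot)+d(y,\cdot)-d(x,y)-d(\cdot,\cdot)+m$, and $\psi$ on $\Sigma_m$-proximities $\sigma$ on $A$ by $\psi(\sigma)(x,y)=\tfrac12(\sigma(x,x)+\sigma(y,y))-\sigma(x,y)$. Then $\psi(\varphi(d))=d$ for every metric $d$ on $A$ belonging to $\mathcal{B}_2$, and $\varphi(\psi(\sigma))=\sigma$ for every $\Sigma_m$-proximity $\sigma$ on $A$.
   Context: $A$ is a nonempty set (possibly infinite); $m\in\mathbb{R}$. A metric on $A$ is a function $d:A^2\to\mathbb{R}$ such that for all $x,y,z\in A$: $d(x,y)=0$ iff $x=y$, and $d(x,y)+d(x,z)-d(y,z)\ge0$. $\mathcal{B}_1$ is a set of functions $A\to\mathbb{R}$ forming a real linear space containing all constant functions, and $\mu:\mathcal{B}_1\to\mathbb{R}$ is a linear functional with $\mu(c)=c$ for every constant function $c$ and monotone: if $f,g\in\mathcal{B}_1$ and $f\ge g$ pointwise, then $\mu(f)\ge\mu(g)$. For $f:A^2\to\mathbb{R}$ such that $y\mapsto f(x,y)$ lies in $\mathcal{B}_1$ for every $x$, write $f(x,\cdot)=\mu(y\mapsto f(x,y))$. $\mathcal{B}_2$ is a set of functions $A^2\to\mathbb{R}$ forming a real linear space that contains all constant functions and all functions $(x,y)\mapsto h(x)$ and $(x,y)\mapsto h(y)$ with $h\in\mathcal{B}_1$, and such that for every $f\in\mathcal{B}_2$: $y\mapsto f(x,y)\in\mathcal{B}_1$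 for every $x$, $x\mapsto f(x,\cdot)\in\mathcal{B}_1$, and $x\mapsto f(x,x)\in\mathcal{B}_1$. For a symmetric $d\in\mathcal{B}_2$, $d(\cdot,\cdot)=\mu(x\mapsto d(x,\cdot))$. A function $\sigma\in\mathcal{B}_2$ is a $\Sigma_m$-proximity on $A$ if for all $x,y,z\in A$: (1) $\sigma(x,\cdot)=m$; (2) $\sigma(x,y)+\sigma(x,z)-\sigma(y,z)\le\sigma(x,x)$, with strict inequality whenever $z=y$ and $x\ne y$. *)

theory Defs
  imports Main "HOL.Real"
begin

text \<open>The set A is modelled by the (nonempty) type 'a. Functions A^2 -> R are curried.\<close>

definition is_metric :: "('a \<Rightarrow> 'a \<Rightarrow> real) \<Rightarrow> bool" where
  "is_metric d \<longleftrightarrow> (\<forall>x y. d x y = 0 \<longleftrightarrow> x = y) \<and> (\<forall>x y z. d x y + d x z - d y z \<ge> 0)"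

definition lin_space :: "('b \<Rightarrow> real) set \<Rightarrow> bool" where
  "lin_space B \<longleftrightarrow> (\<forall>f\<in>B. \<forall>g\<in>B. (\<lambda>x. f x + g x) \<in> B) \<and>
                    (\<forall>f\<in>B. \<forall>c::real. (\<lambda>x. c * f x) \<in> B) \<and>
                    (\<forall>c::real. (\<lambda>_. c) \<in> B)"

definition mean_setting :: "('a \<Rightarrow> real) set \<Rightarrow> (('a \<Rightarrow> real) \<Rightarrow> real) \<Rightarrow> bool" where
  "mean_setting B1 \<mu> \<longleftrightarrow> lin_space B1 \<and>
     (\<forall>f\<in>B1. \<forall>g\<in>B1. \<mu> (\<lambda>x. f x + g x) = \<mu> f + \<mu> g) \<and>
     (\<forall>f\<in>B1. \<forall>c. \<mu> (\<lambda>x. c * f x) = c * \<mu> f) \<and>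
     (\<forall>c. \<mu> (\<lambda>_. c) = c) \<and>
     (\<forall>f\<in>B1. \<forall>g\<in>B1. (\<forall>x. f x \<ge> g x) \<longrightarrow> \<mu> f \<ge> \<mu> g)"

definition lin_space2 :: "('a \<Rightarrow> 'a \<Rightarrow> real) set \<Rightarrow> bool" where
  "lin_space2 B \<longleftrightarrow> (\<forall>f\<in>B. \<forall>g\<in>B. (\<lambda>x y. f x y + g x y) \<in> B) \<and>
                     (\<forall>f\<in>B. \<forall>c::real. (\<lambda>x y. c * f x y) \<in> B) \<and>
                     (\<forall>c::real. (\<lambda>_ _. c) \<in> B)"

text \<open>Standing assumptions on B2 (f(x,.) is written mu (f x)).\<close>
definition B2_setting :: "('a \<Rightarrow> real) set \<Rightarrow> (('a \<Rightarrow> real) \<Rightarrow> real) \<Rightarrow> ('a \<Rightarrow> 'a \<Rightarrow> real) set \<Rightarrow> bool" where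
  "B2_setting B1 \<mu> B2 \<longleftrightarrow> lin_space2 B2 \<and>
     (\<forall>h\<in>B1. (\<lambda>x y. h x) \<in> B2 \<and> (\<lambda>x y. h y) \<in> B2) \<and>
     (\<forall>f\<in>B2. (\<forall>x. f x \<in> B1) \<and> (\<lambda>x. \<mu> (f x)) \<in> B1 \<and> (\<lambda>x. f x x) \<in> B1)"

definition phi :: "(('a \<Rightarrow> real) \<Rightarrow> real) \<Rightarrow> real \<Rightarrow> ('a \<Rightarrow> 'a \<Rightarrow> real) \<Rightarrow> ('a \<Rightarrow> 'a \<Rightarrow> real)" where
  "phi \<mu> m d = (\<lambda>x y. \<mu> (d x) + \<mu> (d y) - d x y - \<mu> (\<lambda>z. \<mu> (d z)) + m)"

definition psi :: "('a \<Rightarrow> 'a \<Rightarrow> real) \<Rightarrow> ('a \<Rightarrow> 'a \<Rightarrow> real)" where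
  "psi \<sigma> = (\<lambda>x y. (\<sigma> x x + \<sigma> y y) / 2 - \<sigma> x y)"

definition Sigma_prox :: "('a \<Rightarrow> 'a \<Rightarrow> real) set \<Rightarrow> (('a \<Rightarrow> real) \<Rightarrow> real) \<Rightarrow> real \<Rightarrow> ('a \<Rightarrow> 'a \<Rightarrow> real) \<Rightarrow> bool" where
  "Sigma_prox B2 \<mu> m \<sigma> \<longleftrightarrow> \<sigma> \<in> B2 \<and>
     (\<forall>x. \<mu> (\<sigma> x) = m) \<and>
     (\<forall>x y z. \<sigma> x y + \<sigma> x z - \<sigma> y z \<le> \<sigma> x x) \<and>
     (\<forall>x y. x \<noteq> y \<longrightarrow> \<sigma> x y + \<sigma> x y - \<sigma> y y < \<sigma> x x)"

end

theory Submission
  imports Defs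
begin

text \<open>Applying \<open>psi\<close> to \<open>phi d\<close> cancels every term
  except \<open>d(x,y)\<close> and the diagonal values \<open>d(x,x)\<close>, which vanish for a metric. Conversely, by
  linearity of \<open>\<mu>\<close> and \<open>\<sigma>(x,\<cdot>) = m\<close>, the row means of \<open>psi \<sigma>\<close> are \<open>\<sigma>(x,x)/2 + D/2 - m\<close>
  with \<open>D = \<mu>(x \<mapsto> \<sigma>(x,x))\<close>, and substituting them into \<open>phi\<close> gives back \<open>\<sigma>\<close>.\<close>

lemma mean_affine:
  assumes "mean_setting B1 \<mu>" and "f \<in> B1"
  shows "\<mu> (\<lambda>y. a + b * f y) = a + b * \<mu> f"
proof -
  have "(\<lambda>_. a) \<in> B1" and "(\<lambda>y. b * f y) \<in> B1"
    using assms by (auto simp: mean_setting_def lin_space_def)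
  then have "\<mu> (\<lambda>y. a + b * f y) = \<mu> (\<lambda>_. a) + \<mu> (\<lambda>y. b * f y)"
    using assms(1) by (simp add: mean_setting_def)
  then show ?thesis
    using assms by (simp add: mean_setting_def)
qed

lemma mean_affine2:
  assumes "mean_setting B1 \<mu>" and "f \<in> B1" and "g \<in> B1"
  shows "\<mu> (\<lambda>y. a + b * f y + c * g y) = a + b * \<mu> f + c * \<mu> g"
proof -
  have "(\<lambda>y. a + b * f y) \<in> B1" and "(\<lambda>y. c * g y) \<in> B1"
    using assms by (auto simp: mean_setting_def lin_space_def)
  then have "\<mu> (\<lambda>y. a + b * f y + c * g y) = \<mu> (\<lambda>y. a + b * f y) + \<mu> (\<lambda>y. c * g y)"
    using assms(1) by (simp add: mean_setting_def)
  then show ?thesis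
    using assms mean_affine by (simp add: mean_setting_def)
qed

lemma psi_phi:
  assumes "\<And>x. d x x = 0"
  shows "psi (phi \<mu> m d) = d"
  using assms by (simp add: psi_def phi_def fun_eq_iff field_simps)

lemma mean_psi_row:
  assumes "mean_setting B1 \<mu>" and "\<sigma> x \<in> B1" and "(\<lambda>y. \<sigma> y y) \<in> B1" and "\<mu> (\<sigma> x) = m"
  shows "\<mu> (psi \<sigma> x) = \<sigma> x x / 2 + \<mu> (\<lambda>y. \<sigma> y y) / 2 - m"
proof -
  have "psi \<sigma> x = (\<lambda>y. \<sigma> x x / 2 + (1/2) * \<sigma> y y + (-1) * \<sigma> x y)"
    by (simp add: psi_def fun_eq_iff)
  then have "\<mu> (psi \<sigma> x) = \<sigma> x x / 2 + (1/2) * \<mu> (\<lambda>y. \<sigma> y y) + (-1) * \<mu> (\<sigma> x)"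
    using mean_affine2[OF assms(1,3,2)] by (simp only:)
  then show ?thesis
    using assms(4) by simp
qed

lemma phi_psi:
  assumes "mean_setting B1 \<mu>" and "\<And>x. \<sigma> x \<in> B1" and "(\<lambda>y. \<sigma> y y) \<in> B1"
    and "\<And>x. \<mu> (\<sigma> x) = m"
  shows "phi \<mu> m (psi \<sigma>) = \<sigma>"
proof -
  define D where "D = \<mu> (\<lambda>y. \<sigma> y y)"
  have row: "\<mu> (psi \<sigma> x) = \<sigma> x x / 2 + D / 2 - m" for x
    unfolding D_def using mean_psi_row[OF assms(1,2,3,4)] .
  have "\<mu> (\<lambda>x. \<mu> (psi \<sigma> x)) = \<mu> (\<lambda>x. (D / 2 - m) + (1/2) * \<sigma> x x)"
    by (simp only: row) (simp add: field_simps)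
  also have "\<dots> = D - m"
    unfolding mean_affine[OF assms(1,3)] D_def by simp
  finally have mean_row_means: "\<mu> (\<lambda>x. \<mu> (psi \<sigma> x)) = D - m" .
  have "phi \<mu> m (psi \<sigma>) x y = \<sigma> x y" for x y
  proof -
    have "phi \<mu> m (psi \<sigma>) x y = \<sigma> x x / 2 + \<sigma> y y / 2 - psi \<sigma> x y"
      by (simp only: phi_def mean_row_means) (simp add: row)
    also have "\<dots> = \<sigma> x y"
      by (simp add: psi_def field_simps)
    finally show ?thesis .
  qed
  then show ?thesis
    by blast
qed

theorem lemma1:
  fixes B1 :: "('a \<Rightarrow> real) set" and \<mu> :: "('a \<Rightarrow> real) \<Rightarrow> real"
    and B2 :: "('a \<Rightarrow> 'a \<Rightarrow> real) set" and m :: real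
  assumes "mean_setting B1 \<mu>" and "B2_setting B1 \<mu> B2"
  shows "(\<forall>d. d \<in> B2 \<and> is_metric d \<longrightarrow> psi (phi \<mu> m d) = d) \<and>
         (\<forall>\<sigma>. Sigma_prox B2 \<mu> m \<sigma> \<longrightarrow> phi \<mu> m (psi \<sigma>) = \<sigma>)"
proof safe
  fix d :: "'a \<Rightarrow> 'a \<Rightarrow> real"
  assume "is_metric d"
  then show "psi (phi \<mu> m d) = d"
    by (intro psi_phi) (simp add: is_metric_def)
next
  fix \<sigma> :: "'a \<Rightarrow> 'a \<Rightarrow> real"
  assume "Sigma_prox B2 \<mu> m \<sigma>"
  then have "\<sigma> \<in> B2" and "\<And>x. \<mu> (\<sigma> x) = m"
    by (auto simp: Sigma_prox_def)
  moreover from \<open>\<sigma> \<in> B2\<close> have "\<And>x. \<sigma> x \<in> B1" and "(\<lambda>y. \<sigma> y y) \<in> B1"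
    using assms(2) by (auto simp: B2_setting_def)
  ultimately show "phi \<mu> m (psi \<sigma>) = \<sigma>"
    using phi_psi[OF assms(1)] by blast
qed

end
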